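(* For any two stationary policies $\pi,\pi'$, $$\mathrm{KL}(\mu^\pi\|\mu^{\pi'})\le\frac1{1-\gamma}\mathcal H(\pi\|\pi').$$
   Context: Discounted MDP with finite state space $\mathcal X$, finite action space $\mathcal A$, transition kernel $P$, discount factor $\gamma\in(0,1)$ and initial distribution $\nu_0$. For a stationary policy $\pi$, $\nu^\pi(x)=(1-\gamma)\sum_{t\ge0}\gamma^t\mathbb P_\pi[X_t=x]$ (trajectory started at $X_0\sim\nu_0$, following $\pi$), $\mu^\pi(x,a)=\nu^\pi(x)\pi(a|x)$, and $\mathcal H(\pi\|\pi')=\sum_x\nu^\pi(x)\mathrm{KL}(\pi(\cdot|x)\|\pi'(\cdot|x))$. *)

theory Defs
  imports Complex_Main "HOL-Library.Extended_Real"
begin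

definition is_dist :: "('i::finite \<Rightarrow> real) \<Rightarrow> bool" where
  "is_dist p \<longleftrightarrow> (\<forall>i. 0 \<le> p i) \<and> (\<Sum>i\<in>UNIV. p i) = 1"

text \<open>Stationary (stochastic) policy: pol x a = pol(a|x).\<close>
definition is_policy :: "('x::finite \<Rightarrow> 'a::finite \<Rightarrow> real) \<Rightarrow> bool" where
  "is_policy pol \<longleftrightarrow> (\<forall>x. is_dist (pol x))"

text \<open>Transition kernel: P x a y = P(y|x,a).\<close>
definition is_kernel :: "('x::finite \<Rightarrow> 'a::finite \<Rightarrow> 'x \<Rightarrow> real) \<Rightarrow> bool" where
  "is_kernel P \<longleftrightarrow> (\<forall>x a. is_dist (P x a))"

text \<open>Law of X_t: state_dist P nu0 pol t x = Prob_pi[X_t = x], with X_0 ~ nu0.\<close>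
primrec state_dist :: "('x::finite \<Rightarrow> 'a::finite \<Rightarrow> 'x \<Rightarrow> real) \<Rightarrow> ('x \<Rightarrow> real)
    \<Rightarrow> ('x \<Rightarrow> 'a \<Rightarrow> real) \<Rightarrow> nat \<Rightarrow> 'x \<Rightarrow> real" where
  "state_dist P nu0 pol 0 = nu0"
| "state_dist P nu0 pol (Suc t) =
     (\<lambda>y. \<Sum>x\<in>UNIV. \<Sum>a\<in>UNIV. state_dist P nu0 pol t x * pol x a * P x a y)"

definition state_occ :: "('x::finite \<Rightarrow> 'a::finite \<Rightarrow> 'x \<Rightarrow> real) \<Rightarrow> ('x \<Rightarrow> real)
    \<Rightarrow> real \<Rightarrow> ('x \<Rightarrow> 'a \<Rightarrow> real) \<Rightarrow> 'x \<Rightarrow> real" where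
  "state_occ P nu0 \<gamma> pol x = (1 - \<gamma>) * (\<Sum>t. \<gamma> ^ t * state_dist P nu0 pol t x)"

definition sa_occ :: "('x::finite \<Rightarrow> 'a::finite \<Rightarrow> 'x \<Rightarrow> real) \<Rightarrow> ('x \<Rightarrow> real)
    \<Rightarrow> real \<Rightarrow> ('x \<Rightarrow> 'a \<Rightarrow> real) \<Rightarrow> 'x \<times> 'a \<Rightarrow> real" where
  "sa_occ P nu0 \<gamma> pol = (\<lambda>(x, a). state_occ P nu0 \<gamma> pol x * pol x a)"

definition KL :: "('i::finite \<Rightarrow> real) \<Rightarrow> ('i \<Rightarrow> real) \<Rightarrow> ereal" where
  "KL p q = (if \<exists>i. p i > 0 \<and> q i = 0 then \<infinity>
             else ereal (\<Sum>i\<in>{i. p i > 0}. p i * ln (p i / q i)))"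

text \<open>Conditional relative entropy H(pol||pol') = sum_x nu^pol(x) KL(pol(.|x) || pol'(.|x))
  (with 0 * infinity = 0).\<close>
definition cond_KL :: "('x::finite \<Rightarrow> 'a::finite \<Rightarrow> 'x \<Rightarrow> real) \<Rightarrow> ('x \<Rightarrow> real)
    \<Rightarrow> real \<Rightarrow> ('x \<Rightarrow> 'a \<Rightarrow> real) \<Rightarrow> ('x \<Rightarrow> 'a \<Rightarrow> real) \<Rightarrow> ereal" where
  "cond_KL P nu0 \<gamma> pol pol' = (\<Sum>x\<in>UNIV. ereal (state_occ P nu0 \<gamma> pol x) * KL (pol x) (pol' x))"

end

theory Submission
  imports Defs
begin

text \<open>Write \<nu>, \<nu>' and \<mu>, \<mu>' for the state and state-action occupancies of \<pi>, \<pi>'.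
  The chain rule for relative entropy gives KL(\<mu> || \<mu>') = KL(\<nu> || \<nu>') + H(\<pi> || \<pi>').
  The flow equation \<nu> = (1 - \<gamma>) \<nu>0 + \<gamma> \<mu>P exhibits \<nu> and \<nu>' as the same mixture of
  \<nu>0 with the images of \<mu> and \<mu>' under P, so the log-sum inequality gives
  KL(\<nu> || \<nu>') \<le> \<gamma> KL(\<mu> || \<mu>'). Hence (1 - \<gamma>) KL(\<mu> || \<mu>') \<le> H(\<pi> || \<pi>').
  This needs the supports to be nested; otherwise \<pi>' gives probability zero to an action that
  \<pi> plays at a visited state, and H is infinite.\<close>

text \<open>For a > 0 and b = 0 the value a * ln (a / 0) = 0 is junk, so the lemmas below
  carry the side condition 0 < a \<Longrightarrow> 0 < b.\<close>
definition rel_entr :: "real \<Rightarrow> real \<Rightarrow> real" where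
  "rel_entr a b = (if 0 < a then a * ln (a / b) else 0)"

lemma rel_entr_ge_diff:
  assumes "0 \<le> b" "0 < a \<Longrightarrow> 0 < b"
  shows "a - b \<le> rel_entr a b"
proof (cases "0 < a")
  case True
  then have "0 < b" using assms by simp
  have "ln (b / a) \<le> b / a - 1"
    using \<open>0 < a\<close> \<open>0 < b\<close> by (intro ln_le_minus_one) simp
  then have "a * ln (b / a) \<le> b - a"
    using \<open>0 < a\<close> by (simp add: field_simps)
  moreover have "ln (a / b) = - ln (b / a)"
    using \<open>0 < a\<close> \<open>0 < b\<close> by (simp add: ln_divide_pos)
  ultimately show ?thesis using True by (simp add: rel_entr_def)
qed (use assms in \<open>auto simp: rel_entr_def\<close>)

lemma rel_entr_rescale:
  assumes "0 \<le> a" "0 < a \<Longrightarrow> 0 < b" "0 < k"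
  shows "rel_entr a b = rel_entr a (k * b) + a * ln k"
proof (cases "0 < a")
  case True
  then have "ln (a / b) = ln (a / (k * b)) + ln k"
    using assms by (simp add: ln_divide_pos ln_mult)
  then show ?thesis using True by (simp add: rel_entr_def algebra_simps)
qed (use assms in \<open>simp add: rel_entr_def\<close>)

lemma rel_entr_mult:
  assumes "0 \<le> u" "0 \<le> p" "0 < u \<Longrightarrow> 0 < v" "0 < u \<Longrightarrow> 0 < p \<Longrightarrow> 0 < q"
  shows "rel_entr (u * p) (v * q) = p * rel_entr u v + u * rel_entr p q"
proof (cases "0 < u \<and> 0 < p")
  case True
  then have "ln (u * p / (v * q)) = ln (u / v) + ln (p / q)"
    using assms by (simp add: ln_divide_pos ln_mult)
  then show ?thesis using True by (simp add: rel_entr_def algebra_simps)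
next
  case False
  then have "u = 0 \<or> p = 0" using assms by auto
  then show ?thesis by (auto simp: rel_entr_def)
qed

lemma rel_entr_scale:
  assumes "0 \<le> c"
  shows "rel_entr (c * a) (c * b) = c * rel_entr a b"
  using assms by (auto simp: rel_entr_def zero_less_mult_iff)

text \<open>Rescaling every b i by A / B reduces the inequality to a - b \<le> rel_entr a b, summed up.\<close>
theorem log_sum_inequality:
  assumes "finite S" "\<And>i. i \<in> S \<Longrightarrow> 0 \<le> a i" "\<And>i. i \<in> S \<Longrightarrow> 0 \<le> b i"
    "\<And>i. i \<in> S \<Longrightarrow> 0 < a i \<Longrightarrow> 0 < b i"
  shows "rel_entr (\<Sum>i\<in>S. a i) (\<Sum>i\<in>S. b i) \<le> (\<Sum>i\<in>S. rel_entr (a i) (b i))"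
proof (cases "(\<Sum>i\<in>S. a i) = 0")
  case True
  then have "\<forall>i\<in>S. a i = 0" using assms by (simp add: sum_nonneg_eq_0_iff)
  then show ?thesis using True by (simp add: rel_entr_def)
next
  case False
  define A where "A = (\<Sum>i\<in>S. a i)"
  define B where "B = (\<Sum>i\<in>S. b i)"
  have "0 < A" using False assms by (simp add: A_def less_le sum_nonneg)
  obtain j where j: "j \<in> S" "0 < a j"
    using False assms by (force simp: sum_nonneg_eq_0_iff less_le)
  have "b j \<le> B" unfolding B_def using assms j by (intro member_le_sum) auto
  then have "0 < B" using assms j by force
  define k where "k = A / B"
  have "0 < k" using \<open>0 < A\<close> \<open>0 < B\<close> by (simp add: k_def)
  have "rel_entr A B = A - k * B + A * ln k"
    using \<open>0 < A\<close> \<open>0 < B\<close> by (simp add: rel_entr_def k_def)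
  also have "\<dots> = (\<Sum>i\<in>S. a i - k * b i) + A * ln k"
    by (simp add: A_def B_def sum_subtractf sum_distrib_left)
  also have "\<dots> \<le> (\<Sum>i\<in>S. rel_entr (a i) (k * b i)) + A * ln k"
    using assms \<open>0 < k\<close> by (intro add_right_mono sum_mono rel_entr_ge_diff) auto
  also have "\<dots> = (\<Sum>i\<in>S. rel_entr (a i) (b i))"
    using assms \<open>0 < k\<close>
    by (simp add: rel_entr_rescale[of "a _" "b _" k] A_def sum.distrib sum_distrib_right)
  finally show ?thesis by (simp add: A_def B_def)
qed

lemma sum_UNIV_prod: "(\<Sum>p\<in>UNIV. f p) = (\<Sum>x\<in>UNIV. \<Sum>y\<in>UNIV. f (x, y))"
  by (simp add: sum.cartesian_product)

lemma sum_rel_entr_chain_rule: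
  fixes u v :: "'x::finite \<Rightarrow> real" and p q :: "'x \<Rightarrow> 'a::finite \<Rightarrow> real"
  assumes "\<And>x. 0 \<le> u x" "\<And>x a. 0 \<le> p x a" "\<And>x. (\<Sum>a\<in>UNIV. p x a) = 1"
    "\<And>x. 0 < u x \<Longrightarrow> 0 < v x" "\<And>x a. 0 < u x \<Longrightarrow> 0 < p x a \<Longrightarrow> 0 < q x a"
  shows "(\<Sum>(x, a)\<in>UNIV. rel_entr (u x * p x a) (v x * q x a))
    = (\<Sum>x\<in>UNIV. rel_entr (u x) (v x)) + (\<Sum>x\<in>UNIV. u x * (\<Sum>a\<in>UNIV. rel_entr (p x a) (q x a)))"
proof -
  have "(\<Sum>(x, a)\<in>UNIV. rel_entr (u x * p x a) (v x * q x a))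
      = (\<Sum>x\<in>UNIV. \<Sum>a\<in>UNIV. p x a * rel_entr (u x) (v x) + u x * rel_entr (p x a) (q x a))"
    using assms by (simp add: sum_UNIV_prod rel_entr_mult)
  also have "\<dots> = (\<Sum>x\<in>UNIV. rel_entr (u x) (v x)) + (\<Sum>x\<in>UNIV. u x * (\<Sum>a\<in>UNIV. rel_entr (p x a) (q x a)))"
    using assms by (simp add: sum.distrib sum_distrib_left sum_distrib_right[symmetric])
  finally show ?thesis .
qed

text \<open>Pointwise, the log-sum inequality splits each mixture over its components; the common
  component c contributes nothing.\<close>
lemma sum_rel_entr_mixture_le:
  fixes m m' :: "'p::finite \<Rightarrow> real" and K :: "'p \<Rightarrow> 'y::finite \<Rightarrow> real"
  assumes "0 \<le> \<gamma>" "\<And>y. 0 \<le> c y" "\<And>p. 0 \<le> m p" "\<And>p. 0 \<le> m' p"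
    "\<And>p. 0 < m p \<Longrightarrow> 0 < m' p" "\<And>p y. 0 \<le> K p y" "\<And>p. (\<Sum>y\<in>UNIV. K p y) = 1"
  shows "(\<Sum>y\<in>UNIV. rel_entr (c y + \<gamma> * (\<Sum>p\<in>UNIV. m p * K p y))
                               (c y + \<gamma> * (\<Sum>p\<in>UNIV. m' p * K p y)))
    \<le> \<gamma> * (\<Sum>p\<in>UNIV. rel_entr (m p) (m' p))"
proof -
  have pointwise: "rel_entr (c y + \<gamma> * (\<Sum>p\<in>UNIV. m p * K p y))
                            (c y + \<gamma> * (\<Sum>p\<in>UNIV. m' p * K p y))
      \<le> (\<Sum>p\<in>UNIV. \<gamma> * K p y * rel_entr (m p) (m' p))" for y
  proof -
    define a where "a = case_option (c y) (\<lambda>p. \<gamma> * K p y * m p)"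
    define b where "b = case_option (c y) (\<lambda>p. \<gamma> * K p y * m' p)"
    have sum_option: "(\<Sum>i\<in>UNIV. f i) = f None + (\<Sum>p\<in>UNIV. f (Some p))" for f :: "'p option \<Rightarrow> real"
      by (simp add: UNIV_option_conv sum.reindex)
    have weight_nonneg: "0 \<le> \<gamma> * K p y" for p
      using assms by simp
    have "0 < \<gamma> * K p y * m' p" if "0 < \<gamma> * K p y * m p" for p
    proof -
      have "0 < \<gamma> * K p y \<and> 0 < m p"
        using that weight_nonneg[of p] assms(3)[of p] by (auto simp: zero_less_mult_iff)
      then show ?thesis using assms(5) by simp
    qed
    then have "rel_entr (\<Sum>i\<in>UNIV. a i) (\<Sum>i\<in>UNIV. b i) \<le> (\<Sum>i\<in>UNIV. rel_entr (a i) (b i))"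
      using assms weight_nonneg
      by (intro log_sum_inequality) (auto simp: a_def b_def split: option.split)
    moreover have "(\<Sum>i\<in>UNIV. a i) = c y + \<gamma> * (\<Sum>p\<in>UNIV. m p * K p y)"
      by (simp add: sum_option a_def sum_distrib_left mult_ac)
    moreover have "(\<Sum>i\<in>UNIV. b i) = c y + \<gamma> * (\<Sum>p\<in>UNIV. m' p * K p y)"
      by (simp add: sum_option b_def sum_distrib_left mult_ac)
    moreover have "(\<Sum>i\<in>UNIV. rel_entr (a i) (b i)) = (\<Sum>p\<in>UNIV. \<gamma> * K p y * rel_entr (m p) (m' p))"
      using weight_nonneg by (simp add: sum_option a_def b_def rel_entr_scale rel_entr_def[of "c y"])
    ultimately show ?thesis by simp
  qed
  have "(\<Sum>y\<in>UNIV. rel_entr (c y + \<gamma> * (\<Sum>p\<in>UNIV. m p * K p y))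
                              (c y + \<gamma> * (\<Sum>p\<in>UNIV. m' p * K p y)))
      \<le> (\<Sum>y\<in>UNIV. \<Sum>p\<in>UNIV. \<gamma> * K p y * rel_entr (m p) (m' p))"
    by (rule sum_mono) (rule pointwise)
  also have "\<dots> = (\<Sum>p\<in>UNIV. \<gamma> * rel_entr (m p) (m' p) * (\<Sum>y\<in>UNIV. K p y))"
    by (subst sum.swap)
      (simp add: sum_distrib_left sum_distrib_right mult.assoc mult.commute[of "K _ _"])
  finally show ?thesis using assms by (simp add: sum_distrib_left)
qed

lemma sum_pos_iff_ex:
  fixes f :: "'i \<Rightarrow> 'b::ordered_comm_monoid_add"
  assumes "finite S" "\<And>i. i \<in> S \<Longrightarrow> 0 \<le> f i"
  shows "0 < sum f S \<longleftrightarrow> (\<exists>i\<in>S. 0 < f i)"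
  using assms sum_pos2[of S _ f] by (auto simp: less_le sum_nonneg sum_nonneg_eq_0_iff)

lemma KL_eq_sum_rel_entr:
  assumes "\<And>i. 0 < p i \<Longrightarrow> 0 < q i"
  shows "KL p q = ereal (\<Sum>i\<in>UNIV. rel_entr (p i) (q i))"
proof -
  have "\<not> (\<exists>i. 0 < p i \<and> q i = 0)"
    using assms by force
  moreover have "(\<Sum>i\<in>{i. 0 < p i}. p i * ln (p i / q i)) = (\<Sum>i\<in>UNIV. rel_entr (p i) (q i))"
    by (simp add: rel_entr_def sum.If_cases)
  ultimately show ?thesis
    by (simp add: KL_def)
qed

context
  fixes P :: "'x::finite \<Rightarrow> 'a::finite \<Rightarrow> 'x \<Rightarrow> real" and nu0 :: "'x \<Rightarrow> real"
  assumes kernel: "is_kernel P" and init: "is_dist nu0"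
begin

lemma kernel_nonneg: "0 \<le> P x a y"
  using kernel by (simp add: is_kernel_def is_dist_def)

lemma state_dist_nonneg:
  assumes "is_policy pol"
  shows "0 \<le> state_dist P nu0 pol t x"
proof (induction t arbitrary: x)
  case 0
  then show ?case using init by (simp add: is_dist_def)
next
  case (Suc t)
  then show ?case
    using assms kernel_nonneg by (auto simp: is_policy_def is_dist_def intro!: sum_nonneg)
qed

lemma sum_state_dist:
  assumes "is_policy pol"
  shows "(\<Sum>x\<in>UNIV. state_dist P nu0 pol t x) = 1"
proof (induction t)
  case 0
  then show ?case using init by (simp add: is_dist_def)
next
  case (Suc t)
  have "(\<Sum>y\<in>UNIV. state_dist P nu0 pol (Suc t) y)
      = (\<Sum>y\<in>UNIV. \<Sum>x\<in>UNIV. \<Sum>a\<in>UNIV. state_dist P nu0 pol t x * pol x a * P x a y)"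
    by simp
  also have "\<dots> = (\<Sum>x\<in>UNIV. \<Sum>a\<in>UNIV. \<Sum>y\<in>UNIV. state_dist P nu0 pol t x * pol x a * P x a y)"
    by (subst sum.swap) (rule sum.cong[OF refl], rule sum.swap)
  also have "\<dots> = (\<Sum>x\<in>UNIV. \<Sum>a\<in>UNIV. state_dist P nu0 pol t x * pol x a * (\<Sum>y\<in>UNIV. P x a y))"
    by (simp add: sum_distrib_left)
  also have "\<dots> = (\<Sum>x\<in>UNIV. state_dist P nu0 pol t x * (\<Sum>a\<in>UNIV. pol x a))"
    using kernel by (simp add: is_kernel_def is_dist_def sum_distrib_left)
  also have "\<dots> = 1"
    using assms Suc by (simp add: is_policy_def is_dist_def)
  finally show ?case .
qed

lemma summable_state_dist:
  assumes "is_policy pol" "0 \<le> \<gamma>" "\<gamma> < 1"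
  shows "summable (\<lambda>t. \<gamma> ^ t * state_dist P nu0 pol t x)"
proof (rule summable_comparison_test[where g = "\<lambda>t. \<gamma> ^ t"])
  have "state_dist P nu0 pol t x \<le> 1" for t
    using member_le_sum[of x UNIV "state_dist P nu0 pol t"] state_dist_nonneg[OF assms(1)]
      sum_state_dist[OF assms(1)]
    by simp
  then show "\<exists>N. \<forall>t\<ge>N. norm (\<gamma> ^ t * state_dist P nu0 pol t x) \<le> \<gamma> ^ t"
    using state_dist_nonneg[OF assms(1)] assms(2) by (auto intro!: mult_left_le simp: abs_mult)
  show "summable (\<lambda>t. \<gamma> ^ t)"
    using assms by (simp add: summable_geometric)
qed

lemma state_occ_nonneg:
  assumes "is_policy pol" "0 \<le> \<gamma>" "\<gamma> < 1"
  shows "0 \<le> state_occ P nu0 \<gamma> pol x"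
  unfolding state_occ_def
  using assms state_dist_nonneg[OF assms(1)] summable_state_dist[OF assms]
  by (auto intro!: mult_nonneg_nonneg suminf_nonneg)

lemma state_occ_pos_iff:
  assumes "is_policy pol" "0 < \<gamma>" "\<gamma> < 1"
  shows "0 < state_occ P nu0 \<gamma> pol x \<longleftrightarrow> (\<exists>t. 0 < state_dist P nu0 pol t x)"
  using assms suminf_pos_iff[OF summable_state_dist, of pol \<gamma> x] state_dist_nonneg[OF assms(1)]
  by (simp add: state_occ_def zero_less_mult_iff)

lemma state_occ_flow:
  assumes "is_policy pol" "0 \<le> \<gamma>" "\<gamma> < 1"
  shows "state_occ P nu0 \<gamma> pol y
    = (1 - \<gamma>) * nu0 y + \<gamma> * (\<Sum>p\<in>UNIV. sa_occ P nu0 \<gamma> pol p * P (fst p) (snd p) y)"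
proof -
  define d where "d t x = \<gamma> ^ t * state_dist P nu0 pol t x" for t x
  define S where "S x = (\<Sum>t. d t x)" for x
  define flow where "flow = (\<Sum>x\<in>UNIV. \<Sum>a\<in>UNIV. S x * (pol x a * P x a y))"
  have summable: "summable (\<lambda>t. d t x)" for x
    using summable_state_dist[OF assms] by (simp add: d_def)
  have "(\<Sum>t. d (Suc t) y) = (\<Sum>t. \<gamma> * (\<Sum>x\<in>UNIV. \<Sum>a\<in>UNIV. d t x * (pol x a * P x a y)))"
    by (simp add: d_def sum_distrib_left mult_ac)
  also have "\<dots> = \<gamma> * (\<Sum>t. \<Sum>x\<in>UNIV. \<Sum>a\<in>UNIV. d t x * (pol x a * P x a y))"
    by (rule suminf_mult) (intro summable_sum summable_mult2 summable)
  also have "(\<Sum>t. \<Sum>x\<in>UNIV. \<Sum>a\<in>UNIV. d t x * (pol x a * P x a y)) = flow"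
    using summable
    by (simp add: flow_def S_def suminf_sum summable_sum summable_mult2 suminf_mult2)
  finally have S_eq: "S y = nu0 y + \<gamma> * flow"
    using suminf_split_head[OF summable[of y]] by (simp add: S_def d_def)
  have "(\<Sum>p\<in>UNIV. sa_occ P nu0 \<gamma> pol p * P (fst p) (snd p) y)
      = (\<Sum>x\<in>UNIV. \<Sum>a\<in>UNIV. (1 - \<gamma>) * (S x * (pol x a * P x a y)))"
    by (simp add: sum_UNIV_prod sa_occ_def state_occ_def S_def d_def mult.assoc)
  also have "\<dots> = (1 - \<gamma>) * flow"
    by (simp add: flow_def sum_distrib_left)
  finally have flow_eq: "(\<Sum>p\<in>UNIV. sa_occ P nu0 \<gamma> pol p * P (fst p) (snd p) y) = (1 - \<gamma>) * flow" .
  have "state_occ P nu0 \<gamma> pol y = (1 - \<gamma>) * S y"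
    by (simp add: state_occ_def S_def d_def)
  also have "\<dots> = (1 - \<gamma>) * nu0 y + \<gamma> * ((1 - \<gamma>) * flow)"
    by (simp add: S_eq algebra_simps)
  finally show ?thesis
    unfolding flow_eq .
qed

lemma state_occ_pos_transfer:
  assumes "is_policy pol" "is_policy pol'" "0 < \<gamma>" "\<gamma> < 1"
    and abs_cont: "\<And>x a. 0 < state_occ P nu0 \<gamma> pol x \<Longrightarrow> 0 < pol x a \<Longrightarrow> 0 < pol' x a"
    and "0 < state_occ P nu0 \<gamma> pol y"
  shows "0 < state_occ P nu0 \<gamma> pol' y"
proof -
  have nonneg: "0 \<le> state_dist P nu0 q t x" "0 \<le> q x a" "0 \<le> P x a y" if "is_policy q" for q t x a y
    using state_dist_nonneg[OF that] that kernel_nonneg by (auto simp: is_policy_def is_dist_def)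
  have reach_iff: "0 < state_dist P nu0 q (Suc t) y
      \<longleftrightarrow> (\<exists>x a. 0 < state_dist P nu0 q t x * q x a * P x a y)" if "is_policy q" for q t y
    using nonneg[OF that] by (simp add: sum_pos_iff_ex sum_nonneg)
  have transfer: "0 < state_dist P nu0 pol' t y" if "0 < state_dist P nu0 pol t y" for t y
    using that
  proof (induction t arbitrary: y)
    case 0
    then show ?case by simp
  next
    case (Suc t)
    then obtain x a where "0 < state_dist P nu0 pol t x * pol x a * P x a y"
      using reach_iff[OF assms(1)] by blast
    then have "0 < state_dist P nu0 pol t x" "0 < pol x a" "0 < P x a y"
      using nonneg[OF assms(1)] by (simp_all add: less_le)
    moreover have "0 < pol' x a"
      using abs_cont calculation state_occ_pos_iff[OF assms(1,3,4)] by blast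
    ultimately have "0 < state_dist P nu0 pol' t x * pol' x a * P x a y"
      using Suc.IH by (metis mult_pos_pos)
    then show ?case
      unfolding reach_iff[OF assms(2)] by blast
  qed
  obtain t where "0 < state_dist P nu0 pol t y"
    using state_occ_pos_iff[OF assms(1,3,4)] assms(6) by blast
  then show ?thesis
    using state_occ_pos_iff[OF assms(2,3,4)] transfer by blast
qed

lemma sa_occ_pos_transfer:
  assumes "is_policy pol" "is_policy pol'" "0 < \<gamma>" "\<gamma> < 1"
    and abs_cont: "\<And>x a. 0 < state_occ P nu0 \<gamma> pol x \<Longrightarrow> 0 < pol x a \<Longrightarrow> 0 < pol' x a"
    and "0 < sa_occ P nu0 \<gamma> pol (x, a)"
  shows "0 < sa_occ P nu0 \<gamma> pol' (x, a)"
proof -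
  have "0 \<le> state_occ P nu0 \<gamma> pol x" "0 \<le> pol x a"
    using state_occ_nonneg[OF assms(1)] assms(1,3,4) by (auto simp: is_policy_def is_dist_def)
  with assms(6) have "0 < state_occ P nu0 \<gamma> pol x" "0 < pol x a"
    by (auto simp: sa_occ_def zero_less_mult_iff)
  then show ?thesis
    using state_occ_pos_transfer[OF assms(1-5)] abs_cont by (simp add: sa_occ_def)
qed

lemma cond_KL_eq_sum_rel_entr:
  assumes "is_policy pol" "0 < \<gamma>" "\<gamma> < 1"
    and abs_cont: "\<And>x a. 0 < state_occ P nu0 \<gamma> pol x \<Longrightarrow> 0 < pol x a \<Longrightarrow> 0 < pol' x a"
  shows "cond_KL P nu0 \<gamma> pol pol'
    = ereal (\<Sum>x\<in>UNIV. state_occ P nu0 \<gamma> pol x * (\<Sum>a\<in>UNIV. rel_entr (pol x a) (pol' x a)))"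
proof -
  have "ereal (state_occ P nu0 \<gamma> pol x) * KL (pol x) (pol' x)
      = ereal (state_occ P nu0 \<gamma> pol x * (\<Sum>a\<in>UNIV. rel_entr (pol x a) (pol' x a)))" for x
  proof (cases "0 < state_occ P nu0 \<gamma> pol x")
    case True
    then show ?thesis
      using abs_cont by (simp add: KL_eq_sum_rel_entr)
  next
    case False
    then have "state_occ P nu0 \<gamma> pol x = 0"
      using state_occ_nonneg[OF assms(1), of \<gamma> x] assms(2,3) by simp
    then show ?thesis
      by (simp add: zero_ereal_def[symmetric])
  qed
  then show ?thesis
    by (simp add: cond_KL_def)
qed

lemma sum_rel_entr_sa_occ_le:
  assumes pol: "is_policy pol" and pol': "is_policy pol'" and "0 < \<gamma>" "\<gamma> < 1"
    and abs_cont: "\<And>x a. 0 < state_occ P nu0 \<gamma> pol x \<Longrightarrow> 0 < pol x a \<Longrightarrow> 0 < pol' x a"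
  shows "(1 - \<gamma>) * (\<Sum>p\<in>UNIV. rel_entr (sa_occ P nu0 \<gamma> pol p) (sa_occ P nu0 \<gamma> pol' p))
    \<le> (\<Sum>x\<in>UNIV. state_occ P nu0 \<gamma> pol x * (\<Sum>a\<in>UNIV. rel_entr (pol x a) (pol' x a)))"
proof -
  define \<nu> \<nu>' \<mu> \<mu>'
    where "\<nu> = state_occ P nu0 \<gamma> pol" and "\<nu>' = state_occ P nu0 \<gamma> pol'"
      and "\<mu> = sa_occ P nu0 \<gamma> pol" and "\<mu>' = sa_occ P nu0 \<gamma> pol'"
  have pol_nonneg: "\<And>x a. 0 \<le> q x a" and pol_sum: "\<And>x. (\<Sum>a\<in>UNIV. q x a) = 1"
    if "is_policy q" for q
    using that by (auto simp: is_policy_def is_dist_def)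
  have \<mu>_nonneg: "0 \<le> \<mu> p" "0 \<le> \<mu>' p" for p
    using state_occ_nonneg[OF pol] state_occ_nonneg[OF pol'] pol_nonneg[OF pol] pol_nonneg[OF pol']
      assms(3,4)
    by (auto simp: \<mu>_def \<mu>'_def sa_occ_def split: prod.split)
  have chain: "(\<Sum>p\<in>UNIV. rel_entr (\<mu> p) (\<mu>' p))
      = (\<Sum>x\<in>UNIV. rel_entr (\<nu> x) (\<nu>' x)) + (\<Sum>x\<in>UNIV. \<nu> x * (\<Sum>a\<in>UNIV. rel_entr (pol x a) (pol' x a)))"
    using sum_rel_entr_chain_rule[of \<nu> pol \<nu>' pol'] state_occ_nonneg[OF pol] assms(3,4)
      pol_nonneg[OF pol] pol_sum[OF pol] state_occ_pos_transfer[OF assms] abs_cont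
    by (simp add: \<mu>_def \<mu>'_def \<nu>_def \<nu>'_def sa_occ_def case_prod_unfold)
  have \<mu>_abs_cont: "0 < \<mu> p \<Longrightarrow> 0 < \<mu>' p" for p
    using sa_occ_pos_transfer[OF assms, of "fst p" "snd p"] by (simp add: \<mu>_def \<mu>'_def)
  have "(\<Sum>y\<in>UNIV. rel_entr (\<nu> y) (\<nu>' y)) \<le> \<gamma> * (\<Sum>p\<in>UNIV. rel_entr (\<mu> p) (\<mu>' p))"
    unfolding \<nu>_def \<nu>'_def state_occ_flow[OF pol less_imp_le[OF assms(3)] assms(4)]
      state_occ_flow[OF pol' less_imp_le[OF assms(3)] assms(4)] \<mu>_def[symmetric] \<mu>'_def[symmetric]
    using assms(3,4) by (intro sum_rel_entr_mixture_le)
      (use \<mu>_nonneg \<mu>_abs_cont kernel_nonneg init kernel in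
        \<open>auto simp: is_dist_def is_kernel_def\<close>)
  with chain show ?thesis
    by (simp add: \<nu>_def \<mu>_def \<mu>'_def algebra_simps)
qed

end

theorem mainTheorem9:
  fixes P :: "'x::finite \<Rightarrow> 'a::finite \<Rightarrow> 'x \<Rightarrow> real"
    and nu0 :: "'x \<Rightarrow> real"
    and \<gamma> :: real
    and pol pol' :: "'x \<Rightarrow> 'a \<Rightarrow> real"
  assumes "0 < \<gamma>" and "\<gamma> < 1"
    and "is_kernel P" and "is_dist nu0"
    and "is_policy pol" and "is_policy pol'"
  shows "KL (sa_occ P nu0 \<gamma> pol) (sa_occ P nu0 \<gamma> pol')
           \<le> ereal (1 / (1 - \<gamma>)) * cond_KL P nu0 \<gamma> pol pol'"
proof (cases "\<exists>x a. 0 < state_occ P nu0 \<gamma> pol x \<and> 0 < pol x a \<and> pol' x a = 0")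
  case True
  then obtain x a where "0 < state_occ P nu0 \<gamma> pol x" "0 < pol x a" "pol' x a = 0"
    by blast
  then have "ereal (state_occ P nu0 \<gamma> pol x) * KL (pol x) (pol' x) = \<infinity>"
    by (auto simp: KL_def)
  then have "cond_KL P nu0 \<gamma> pol pol' = \<infinity>"
    by (auto simp: cond_KL_def sum_Pinfty)
  then show ?thesis
    using assms(1,2) by simp
next
  case False
  with \<open>is_policy pol'\<close> have abs_cont:
    "\<And>x a. 0 < state_occ P nu0 \<gamma> pol x \<Longrightarrow> 0 < pol x a \<Longrightarrow> 0 < pol' x a"
    by (fastforce simp: is_policy_def is_dist_def less_le)
  have "KL (sa_occ P nu0 \<gamma> pol) (sa_occ P nu0 \<gamma> pol')
      = ereal (\<Sum>p\<in>UNIV. rel_entr (sa_occ P nu0 \<gamma> pol p) (sa_occ P nu0 \<gamma> pol' p))"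
    using sa_occ_pos_transfer[OF assms(3-6,1,2) abs_cont] by (auto intro: KL_eq_sum_rel_entr)
  moreover have "cond_KL P nu0 \<gamma> pol pol'
      = ereal (\<Sum>x\<in>UNIV. state_occ P nu0 \<gamma> pol x * (\<Sum>a\<in>UNIV. rel_entr (pol x a) (pol' x a)))"
    using cond_KL_eq_sum_rel_entr[OF assms(3-5,1,2) abs_cont] .
  ultimately show ?thesis
    using sum_rel_entr_sa_occ_le[OF assms(3-6,1,2) abs_cont] assms(1,2)
    by (simp add: field_simps)
qed

end
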